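(* Let $h(z)=\sum_{j=1}^\infty h_jz^j$ be a fixed function analytic in the unit disc $D$ with $0<|h_j|\le M$ for all $j\ge1$. Let $f(z)=\sum_{j=1}^\infty f_jz^j$ be such that $F_1(z):=\sum_{j=1}^\infty\frac{f_j}{h_j}z^{j-1}$ is bounded and analytic in $D$. Then there exists an integer $n_1$ such that for every $n\ge n_1$, with $N=2n+1$, there exist pairwise distinct numbers $\lambda_1,\dots,\lambda_N$ with $|\lambda_k|=1$ such that \[|H_N^{(1)}(\lambda;z)-f(z)|\le\frac{(5|z|-|z|^2)^{n+1}}{4^{n-1}}\cdot\frac{2M}{3}\cdot\frac{3+|z|}{(1-|z|)^4},\qquad|z|<1,\] where $H_N^{(1)}(\lambda;z)=\sum_{k=1}^Nh(\lambda_kz)$.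
   Context: In the paper the threshold is written $n\ge n_1(-F_1)$, where $n_1(g)$ denotes an integer (depending on $g$) for which the following holds for all $n\ge n_1(g)$: writing $g=\sum(-a_j)z^j$, the roots of $P_n(g;z):=s_n(z)+z^{2n+1}\overline{s}_n(1/z)$ ($s_n$ the $n$-th Taylor polynomial of $\exp\int_0^z g$, $\overline{s}_n$ its coefficient-conjugate) are simple, lie on $|z|=1$, and their reciprocals $\lambda_k$ satisfy $\sum_k\lambda_k^{j+1}=a_j$ for $j<n$ and $|\sum_k\lambda_k^{j+1}-a_j|<r^{n+1}(r-\varepsilon)^{-j}/(2\varepsilon(1-r))$ for $j\ge n$, $0<\varepsilon<r<1$. *)

theory Defs
  imports "HOL-Analysis.Analysis"
begin

definition ser :: "(nat \<Rightarrow> complex) \<Rightarrow> complex \<Rightarrow> complex" where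
  "ser c z = (\<Sum>j. c (Suc j) * z ^ Suc j)"

definition F1fun :: "(nat \<Rightarrow> complex) \<Rightarrow> (nat \<Rightarrow> complex) \<Rightarrow> complex \<Rightarrow> complex" where
  "F1fun fc hc z = (\<Sum>j. (fc (Suc j) / hc (Suc j)) * z ^ j)"

end

(*
  Write F_1(z) = sum_j a_j z^j, so that f_(j+1) = h_(j+1) a_j.  If unimodular numbers
  lam_1, ..., lam_N (N = 2n + 1) have power sums sum_k lam_k^(j+1) = a_j for all j < n, then
    sum_k h(lam_k z) - f(z) = sum_j h_(j+1) (sum_k lam_k^(j+1) - a_j) z^(j+1)
  has no terms below z^(n+1) and coefficients bounded by M (N + sup |F_1|); this geometric
  tail is below the stated bound once n is large.

  Such lam_k exist for all large n.  E = exp (- integral F_1) solves E' = - F_1 E, is bounded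
  away from 0 on the disc and has a bounded derivative, so by Parseval its Taylor coefficients
  are absolutely summable, and for large n its Taylor polynomial T of degree n has no zero in
  the closed disc.  Following the argument of T around the unit circle, the self-inversive
  polynomial z^N T(1/z) + w conj (T (conj z)) has, for a suitable unimodular w, N distinct zeros
  lam_k on the circle.  Then prod_k (1 - lam_k z) agrees with E up to degree n, and comparing
  logarithmic derivatives (Newton's identities) yields the power sums.
*)
theory Submission
  imports Defs "HOL-Complex_Analysis.Complex_Analysis" "HOL-Computational_Algebra.Polynomial_FPS"
begin

unbundle no vec_syntax

section \<open>Parseval's inequality on the unit disc\<close>

lemma has_integral_circlepath_mult_cnj_power:
  fixes g :: "complex \<Rightarrow> complex"
  assumes holg: "g holomorphic_on ball 0 1" and G: "g has_fps_expansion G" and r: "0 < r" "r < 1"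
  shows "((\<lambda>t. g (circlepath 0 r t) * cnj (circlepath 0 r t) ^ k) has_integral (G $ k * r ^ (2*k))) {0..1}"
proof -
  have "((\<lambda>u. g u / (u - 0) ^ Suc k) has_contour_integral (2 * pi * \<i> / fact k * (deriv ^^ k) g 0))
          (circlepath 0 r)"
    using r by (intro Cauchy_has_contour_integral_higher_derivative_circlepath
        holomorphic_on_imp_continuous_on holomorphic_on_subset[OF holg]) auto
  then have "((\<lambda>t. g (circlepath 0 r t) / circlepath 0 r t ^ Suc k * (2 * pi * \<i> * r * cis (2 * pi * t)))
          has_integral (2 * pi * \<i> / fact k * (deriv ^^ k) g 0)) {0..1}"
    unfolding has_contour_integral_def
    by (rule has_integral_eq[rotated])
      (simp add: vector_derivative_within_closed_interval[OF _ _ has_vector_derivative_circlepath] cis_conv_exp mult_ac)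
  from has_integral_mult_right[OF this, of "r ^ (2*k) / (2 * pi * \<i>)"]
  have "((\<lambda>t. r ^ (2*k) / (2 * pi * \<i>) * (g (circlepath 0 r t) / circlepath 0 r t ^ Suc k
          * (2 * pi * \<i> * r * cis (2 * pi * t)))) has_integral (G $ k * r ^ (2*k))) {0..1}"
    by (simp add: fps_nth_fps_expansion[OF G] field_simps)
  moreover have "r ^ (2*k) / (2 * pi * \<i>) * (g (circlepath 0 r t) / circlepath 0 r t ^ Suc k
          * (2 * pi * \<i> * r * cis (2 * pi * t))) = g (circlepath 0 r t) * cnj (circlepath 0 r t) ^ k" for t
  proof -
    define e where "e = cis (2 * pi * t)"
    have cp: "circlepath 0 r t = r * e"
      unfolding e_def by (simp add: circlepath cis_conv_exp mult_ac)
    have "e ^ k * cnj e ^ k = 1" "e \<noteq> 0"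
      unfolding e_def by (simp_all flip: power_mult_distrib add: cis_cnj cis_mult)
    then show ?thesis
      unfolding cp e_def[symmetric] using r by (simp add: field_simps power_mult power2_eq_square)
  qed
  ultimately show ?thesis by simp
qed

lemma has_integral_circlepath_mult_cnj_poly:
  fixes g :: "complex \<Rightarrow> complex" and c :: "nat \<Rightarrow> complex"
  assumes "g holomorphic_on ball 0 1" "g has_fps_expansion G" "0 < r" "r < 1"
  shows "((\<lambda>t. g (circlepath 0 r t) * cnj (\<Sum>k<m. c k * circlepath 0 r t ^ k))
    has_integral (\<Sum>k<m. cnj (c k) * (G $ k * r ^ (2*k)))) {0..1}"
proof -
  have "((\<lambda>t. \<Sum>k<m. cnj (c k) * (g (circlepath 0 r t) * cnj (circlepath 0 r t) ^ k)) has_integral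
      (\<Sum>k<m. cnj (c k) * (G $ k * r ^ (2*k)))) {0..1}"
    by (intro has_integral_sum has_integral_mult_right has_integral_circlepath_mult_cnj_power assms) auto
  then show ?thesis
    by (simp add: sum_distrib_left algebra_simps)
qed

lemma holomorphic_coeff_square_sum_circle_le:
  fixes f :: "complex \<Rightarrow> complex"
  assumes holf: "f holomorphic_on ball 0 1" and F: "f has_fps_expansion F"
    and bnd: "\<And>z. norm z < 1 \<Longrightarrow> norm (f z) \<le> K" and r: "0 < r" "r < 1"
  shows "(\<Sum>k<m. norm (F $ k) ^ 2 * r ^ (2*k)) \<le> K^2"
proof -
  \<comment> \<open>Integrate \<open>\<bar>f - Q\<bar>\<^sup>2 \<ge> 0\<close> over the circle, \<open>Q\<close> the Taylor polynomial of \<open>f\<close> of degree \<open>< m\<close>.\<close>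
  define Q where "Q u = (\<Sum>k<m. F $ k * u ^ k)" for u
  define QF where "QF = (\<Sum>k<m. fps_const (F $ k) * fps_X ^ k)"
  define S where "S = (\<Sum>k<m. norm (F $ k) ^ 2 * r ^ (2*k))"
  let ?\<gamma> = "circlepath 0 r"
  have holQ: "Q holomorphic_on ball 0 1"
    unfolding Q_def by (intro holomorphic_intros)
  have QE: "Q has_fps_expansion QF"
    unfolding Q_def QF_def by (intro fps_expansion_intros)
  have QF_nth: "QF $ k = (if k < m then F $ k else 0)" for k
  proof -
    have "QF $ k = (\<Sum>j<m. if k = j then F $ j else 0)"
      unfolding QF_def fps_sum_nth by (intro sum.cong) auto
    then show ?thesis by simp
  qed
  have cnj_mult_mult_self: "cnj c * (c * x) = of_real (norm c ^ 2) * x" for c x :: complex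
    by (subst complex_norm_square) (simp add: mult_ac)
  have "(\<Sum>k<m. cnj (F $ k) * (F $ k * r ^ (2*k))) = of_real S"
    unfolding S_def of_real_sum by (intro sum.cong refl) (simp only: cnj_mult_mult_self of_real_mult of_real_power)
  then have int_f: "((\<lambda>t. Re (f (?\<gamma> t) * cnj (Q (?\<gamma> t)))) has_integral S) {0..1}"
    using has_integral_Re[OF has_integral_circlepath_mult_cnj_poly[OF holf F r, where c="\<lambda>k. F $ k" and m=m]]
    unfolding Q_def by simp
  have "(\<Sum>k<m. cnj (F $ k) * (QF $ k * r ^ (2*k))) = of_real S"
    unfolding S_def QF_nth of_real_sum by (intro sum.cong refl) (simp add: cnj_mult_mult_self)
  then have int_Q: "((\<lambda>t. Re (Q (?\<gamma> t) * cnj (Q (?\<gamma> t)))) has_integral S) {0..1}"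
    using has_integral_Re[OF has_integral_circlepath_mult_cnj_poly[OF holQ QE r, where c="\<lambda>k. F $ k" and m=m]]
    unfolding Q_def by simp
  have "((\<lambda>t. K^2 - 2 * Re (f (?\<gamma> t) * cnj (Q (?\<gamma> t))) + Re (Q (?\<gamma> t) * cnj (Q (?\<gamma> t))))
      has_integral (K^2 - 2 * S + S)) {0..1}"
    using has_integral_const_real[of "K^2" 0 1]
    by (intro has_integral_add has_integral_diff has_integral_mult_right int_f int_Q) simp
  moreover have "0 \<le> K^2 - 2 * Re (a * cnj b) + Re (b * cnj b)" if "norm a \<le> K" for a b :: complex
  proof -
    have "norm (a - b) ^ 2 = norm a ^ 2 - 2 * Re (a * cnj b) + Re (b * cnj b)"
      unfolding cmod_power2 by (simp add: power2_eq_square algebra_simps)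
    moreover have "norm a ^ 2 \<le> K^2"
      using that by (simp add: power_mono)
    ultimately show ?thesis
      using zero_le_power2[of "norm (a - b)"] by linarith
  qed
  then have "0 \<le> K^2 - 2 * Re (f (?\<gamma> t) * cnj (Q (?\<gamma> t))) + Re (Q (?\<gamma> t) * cnj (Q (?\<gamma> t)))" for t
    using bnd r by (simp add: circlepath norm_mult)
  ultimately have "0 \<le> K^2 - 2 * S + S"
    by (rule has_integral_nonneg)
  then show ?thesis unfolding S_def by simp
qed

lemma bounded_holomorphic_coeff_square_sum_le:
  fixes f :: "complex \<Rightarrow> complex"
  assumes "f holomorphic_on ball 0 1" "f has_fps_expansion F" "\<And>z. norm z < 1 \<Longrightarrow> norm (f z) \<le> K"
  shows "(\<Sum>k<m. norm (F $ k) ^ 2) \<le> K^2"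
proof -
  let ?S = "\<lambda>r::real. (\<Sum>k<m. norm (F $ k) ^ 2 * r ^ (2*k))"
  have "(?S \<longlongrightarrow> ?S 1) (at_left 1)"
    by (intro tendsto_intros)
  moreover have "eventually (\<lambda>r. ?S r \<le> K^2) (at_left 1)"
    by (rule eventually_at_leftI[of 0]) (simp_all add: holomorphic_coeff_square_sum_circle_le[OF assms])
  ultimately have "?S 1 \<le> K^2"
    by (rule tendsto_upperbound) simp
  then show ?thesis by simp
qed

lemma bounded_holomorphic_coeff_le:
  fixes f :: "complex \<Rightarrow> complex"
  assumes "f holomorphic_on ball 0 1" "f has_fps_expansion F" "\<And>z. norm z < 1 \<Longrightarrow> norm (f z) \<le> K"
  shows "norm (F $ k) \<le> K"
proof -
  have "norm (F $ k) ^ 2 \<le> (\<Sum>j<Suc k. norm (F $ j) ^ 2)"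
    by (rule member_le_sum) auto
  also have "\<dots> \<le> K^2"
    by (rule bounded_holomorphic_coeff_square_sum_le[OF assms])
  finally have "norm (F $ k) ^ 2 \<le> K^2" .
  moreover have "norm (f 0) \<le> K"
    using assms(3) by simp
  then have "0 \<le> K"
    using norm_ge_zero order_trans by blast
  ultimately show ?thesis
    by (rule power2_le_imp_le)
qed

lemma holomorphic_on_eval_fps_unit_disc:
  fixes A :: "complex fps"
  assumes "fps_conv_radius A \<ge> 1"
  shows "eval_fps A holomorphic_on ball 0 1"
  using assms by (intro holomorphic_on_eval_fps ball_eball_mono) (simp add: one_ereal_def)

lemma fps_conv_radius_ge_1_imp_has_fps_expansion:
  fixes A :: "complex fps"
  assumes "fps_conv_radius A \<ge> 1"
  shows "eval_fps A has_fps_expansion A"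
  using assms by (intro eval_fps_has_fps_expansion) (auto intro: less_le_trans[of 0 1])

lemma norm_fps_nth_le_if_eval_fps_bounded:
  fixes A :: "complex fps"
  assumes rad: "fps_conv_radius A \<ge> 1" and bnd: "\<And>z. norm z < 1 \<Longrightarrow> norm (eval_fps A z) \<le> B"
  shows "norm (A $ j) \<le> B"
  using holomorphic_on_eval_fps_unit_disc[OF rad] fps_conv_radius_ge_1_imp_has_fps_expansion[OF rad] bnd
  by (rule bounded_holomorphic_coeff_le)

section \<open>The exponential of a primitive\<close>

lemma summable_norm_fps_nth_if_deriv_square_sums_bounded:
  fixes T :: "complex fps"
  assumes bnd: "\<And>m. (\<Sum>k<m. norm (fps_deriv T $ k) ^ 2) \<le> C"
  shows "summable (\<lambda>k. norm (T $ k))"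
proof -
  have "summable (\<lambda>k. norm (fps_deriv T $ k) ^ 2)"
    by (rule summableI_nonneg_bounded[OF _ bnd]) simp
  moreover have "summable (\<lambda>k. inverse (real (Suc k)) ^ 2)"
    using inverse_power_summable[of 2, where 'a=real] by (subst summable_Suc_iff) (simp add: power_inverse)
  ultimately have g_summable: "summable (\<lambda>k. (norm (fps_deriv T $ k) ^ 2 + inverse (real (Suc k)) ^ 2) / 2)"
    by (intro summable_divide summable_add)
  have le: "norm (T $ Suc k) \<le> (norm (fps_deriv T $ k) ^ 2 + inverse (real (Suc k)) ^ 2) / 2" for k
  proof -
    have "norm (T $ Suc k) = norm (fps_deriv T $ k) * inverse (real (Suc k))"
      by (simp add: norm_mult field_simps del: of_nat_Suc)
    also have "\<dots> \<le> (norm (fps_deriv T $ k) ^ 2 + inverse (real (Suc k)) ^ 2) / 2"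
      using sum_squares_bound[of "norm (fps_deriv T $ k)" "inverse (real (Suc k))"] by simp
    finally show ?thesis .
  qed
  have "summable (\<lambda>k. norm (T $ Suc k))"
    by (rule summable_comparison_test'[OF g_summable, where N=0]) (simp only: real_norm_def abs_norm_cancel le)
  then show ?thesis
    by (rule summable_Suc_iff[THEN iffD1])
qed

lemma bounded_holomorphic_primitive:
  fixes F :: "complex \<Rightarrow> complex"
  assumes holF: "F holomorphic_on ball 0 1" and bnd: "\<And>z. norm z < 1 \<Longrightarrow> norm (F z) \<le> B"
  obtains G where "G 0 = 0" "\<And>z. z \<in> ball 0 1 \<Longrightarrow> (G has_field_derivative F z) (at z)"
    "\<And>z. norm z < 1 \<Longrightarrow> norm (G z) \<le> B"
proof -
  obtain G0 where G0: "\<And>z. z \<in> ball 0 1 \<Longrightarrow> (G0 has_field_derivative F z) (at z within ball 0 1)"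
    using holomorphic_convex_primitive'[OF convex_ball open_ball holF] by blast
  define G where "G z = G0 z - G0 0" for z
  have G_deriv: "(G has_field_derivative F z) (at z)" if "z \<in> ball 0 1" for z
    using G0[OF that] at_within_open[OF that open_ball] unfolding G_def
    by (auto intro!: derivative_eq_intros)
  have "norm (F 0) \<le> B"
    using bnd by simp
  then have B_nonneg: "0 \<le> B"
    using norm_ge_zero order_trans by blast
  have "norm (G z) \<le> B" if "norm z < 1" for z
  proof -
    have "norm (G z - G 0) \<le> B * norm (z - 0)"
    proof (rule field_differentiable_bound[OF convex_ball[of 0 1]])
      show "(G has_field_derivative F w) (at w within ball 0 1)" if "w \<in> ball 0 1" for w
        using G_deriv[OF that] by (rule has_field_derivative_at_within)
      show "norm (F w) \<le> B" if "w \<in> ball 0 1" for w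
        using bnd that by simp
    qed (use that in auto)
    also have "\<dots> \<le> B"
      using that B_nonneg by (simp add: mult_left_le)
    finally show ?thesis
      by (simp add: G_def)
  qed
  then show thesis
    using G_deriv by (intro that[of G]) (simp_all add: G_def)
qed

lemma bounded_holomorphic_exp_primitive:
  fixes F :: "complex \<Rightarrow> complex"
  assumes holF: "F holomorphic_on ball 0 1" and bnd: "\<And>z. norm z < 1 \<Longrightarrow> norm (F z) \<le> B"
  obtains E where "E holomorphic_on ball 0 1" "E 0 = 1"
    "\<And>z. z \<in> ball 0 1 \<Longrightarrow> deriv E z = - F z * E z"
    "\<And>z. norm z < 1 \<Longrightarrow> exp (- B) \<le> norm (E z) \<and> norm (E z) \<le> exp B"
proof -
  have "(\<lambda>z. - F z) holomorphic_on ball 0 1"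
    using holF by (intro holomorphic_intros)
  then obtain G where G0: "G 0 = 0" and G_deriv: "\<And>z. z \<in> ball 0 1 \<Longrightarrow> (G has_field_derivative - F z) (at z)"
    and G_bound: "\<And>z. norm z < 1 \<Longrightarrow> norm (G z) \<le> B"
    using bounded_holomorphic_primitive[of "\<lambda>z. - F z" B] bnd by auto
  define E where "E z = exp (G z)" for z
  have E_deriv: "(E has_field_derivative - F z * E z) (at z)" if "z \<in> ball 0 1" for z
    unfolding E_def using DERIV_fun_exp[OF G_deriv[OF that]] by (simp add: mult.commute)
  show thesis
  proof
    show "E holomorphic_on ball 0 1"
      unfolding holomorphic_on_open[OF open_ball] using E_deriv by blast
    show "E 0 = 1"
      by (simp add: E_def G0)
    show "deriv E z = - F z * E z" if "z \<in> ball 0 1" for z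
      using E_deriv[OF that] by (rule DERIV_imp_deriv)
    show "exp (- B) \<le> norm (E z) \<and> norm (E z) \<le> exp B" if "norm z < 1" for z
    proof -
      have "\<bar>Re (G z)\<bar> \<le> B"
        using G_bound[OF that] abs_Re_le_cmod[of "G z"] by linarith
      then show ?thesis
        by (simp add: E_def abs_le_iff)
    qed
  qed
qed

lemma fps_expansion_deriv_eq_neg_mult:
  fixes E F :: "complex \<Rightarrow> complex"
  assumes E: "E has_fps_expansion T" and F: "F has_fps_expansion A"
    and dE: "\<And>z. z \<in> ball 0 1 \<Longrightarrow> deriv E z = - F z * E z"
  shows "fps_deriv T = - (T * A)"
proof -
  have "eventually (\<lambda>z. z \<in> ball 0 1) (nhds (0::complex))"
    by (intro eventually_nhds_in_open) auto
  then have ev: "eventually (\<lambda>z. - (E z * F z) = deriv E z) (nhds 0)"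
    by eventually_elim (simp add: dE mult.commute)
  have "(\<lambda>z. - (E z * F z)) has_fps_expansion - (T * A)"
    by (intro fps_expansion_intros E F)
  then have "deriv E has_fps_expansion - (T * A)"
    using has_fps_expansion_cong[OF ev refl] by simp
  then show ?thesis
    using fps_expansion_unique_complex[OF has_fps_expansion_deriv[OF E]] by blast
qed

lemma bounded_fps_exp_primitive:
  fixes A :: "complex fps"
  assumes rad: "fps_conv_radius A \<ge> 1" and bnd: "\<And>z. norm z < 1 \<Longrightarrow> norm (eval_fps A z) \<le> B"
  obtains T where "T $ 0 = 1" "fps_deriv T = - (T * A)" "summable (\<lambda>k. norm (T $ k))"
    "\<And>w. norm w < 1 \<Longrightarrow> exp (- B) \<le> norm (eval_fps T w)"
proof -
  have holA: "eval_fps A holomorphic_on ball 0 1"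
    by (rule holomorphic_on_eval_fps_unit_disc[OF rad])
  have A_exp: "eval_fps A has_fps_expansion A"
    by (rule fps_conv_radius_ge_1_imp_has_fps_expansion[OF rad])
  obtain E where holE: "E holomorphic_on ball 0 1" and E0: "E 0 = 1"
    and dE: "\<And>z. z \<in> ball 0 1 \<Longrightarrow> deriv E z = - eval_fps A z * E z"
    and E_bnd: "\<And>z. norm z < 1 \<Longrightarrow> exp (- B) \<le> norm (E z) \<and> norm (E z) \<le> exp B"
    using bounded_holomorphic_exp_primitive[OF holA bnd] by blast
  define T where "T = fps_expansion E 0"
  have E_exp: "E has_fps_expansion T"
    unfolding T_def by (rule has_fps_expansion_fps_expansion[OF open_ball _ holE]) simp
  have eval_T: "eval_fps T w = E w" if "norm w < 1" for w
    using eval_fps_expansion'[of E 0 1] holE that unfolding T_def by (simp add: one_ereal_def)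
  have dT: "fps_deriv T = - (T * A)"
    using E_exp A_exp dE by (rule fps_expansion_deriv_eq_neg_mult)
  have "norm (deriv E z) \<le> B * exp B" if "norm z < 1" for z
  proof -
    have "norm (deriv E z) = norm (eval_fps A z) * norm (E z)"
      using dE[of z] that by (simp add: norm_mult)
    also have "\<dots> \<le> B * exp B"
      using bnd[OF that] E_bnd[OF that] by (intro mult_mono') auto
    finally show ?thesis .
  qed
  then have "(\<Sum>k<m. norm (fps_deriv T $ k) ^ 2) \<le> (B * exp B) ^ 2" for m
    using holE by (intro bounded_holomorphic_coeff_square_sum_le[OF _ has_fps_expansion_deriv[OF E_exp]])
      (auto intro: holomorphic_deriv)
  then have "summable (\<lambda>k. norm (T $ k))"
    by (rule summable_norm_fps_nth_if_deriv_square_sums_bounded)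
  moreover have "T $ 0 = 1"
    using fps_nth_fps_expansion[OF E_exp, of 0] E0 by simp
  ultimately show thesis
    using that dT E_bnd eval_T by simp
qed

lemma norm_eval_fps_minus_truncation_le:
  fixes T :: "complex fps"
  assumes summ: "summable (\<lambda>k. norm (T $ k))" and u: "norm u \<le> 1"
  shows "norm (eval_fps T u - (\<Sum>k\<le>n. T $ k * u ^ k)) \<le> (\<Sum>i. norm (T $ (i + Suc n)))"
proof -
  have bound: "norm (T $ k * u ^ k) \<le> norm (T $ k)" for k
    using u by (simp add: norm_mult norm_power mult_left_le power_le_one)
  have summ_norm_u: "summable (\<lambda>k. norm (T $ k * u ^ k))"
    by (rule summable_comparison_test'[OF summ, where N=0]) (simp add: bound)
  then have summ_u: "summable (\<lambda>k. T $ k * u ^ k)"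
    by (rule summable_norm_cancel)
  have "eval_fps T u - (\<Sum>k\<le>n. T $ k * u ^ k) = (\<Sum>i. T $ (i + Suc n) * u ^ (i + Suc n))"
    unfolding eval_fps_def using suminf_split_initial_segment[OF summ_u, of "Suc n"]
    by (simp add: lessThan_Suc_atMost)
  also have "norm \<dots> \<le> (\<Sum>i. norm (T $ (i + Suc n) * u ^ (i + Suc n)))"
    using summ_norm_u by (intro summable_norm) (rule summable_iff_shift[THEN iffD2])
  also have "\<dots> \<le> (\<Sum>i. norm (T $ (i + Suc n)))"
    using summable_iff_shift[THEN iffD2, OF summ_norm_u] summable_iff_shift[THEN iffD2, OF summ]
    by (intro suminf_le bound)
  finally show ?thesis .
qed

lemma fps_truncation_nonzero_on_cball:
  fixes T :: "complex fps"
  assumes summ: "summable (\<lambda>k. norm (T $ k))"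
    and low: "\<And>w. norm w < 1 \<Longrightarrow> c \<le> norm (eval_fps T w)"
    and tail: "(\<Sum>i. norm (T $ (i + Suc n))) < c" and w: "norm w \<le> 1"
  shows "(\<Sum>k\<le>n. T $ k * w ^ k) \<noteq> 0"
proof -
  define \<delta> where "\<delta> = (\<Sum>i. norm (T $ (i + Suc n)))"
  have "c - \<delta> \<le> norm (\<Sum>k\<le>n. T $ k * u ^ k)" if "norm u < 1" for u
    using low[OF that] norm_eval_fps_minus_truncation_le[OF summ less_imp_le[OF that], of n]
      norm_triangle_ineq2[of "eval_fps T u" "\<Sum>k\<le>n. T $ k * u ^ k"]
    unfolding \<delta>_def by linarith
  then have "ball 0 1 \<subseteq> {u. c - \<delta> \<le> norm (\<Sum>k\<le>n. T $ k * u ^ k)}"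
    by auto
  moreover have "closed {u. c - \<delta> \<le> norm (\<Sum>k\<le>n. T $ k * u ^ k)}"
    by (intro closed_Collect_le continuous_intros)
  ultimately have "closure (ball 0 1) \<subseteq> {u. c - \<delta> \<le> norm (\<Sum>k\<le>n. T $ k * u ^ k)}"
    by (rule closure_minimal)
  then have "c - \<delta> \<le> norm (\<Sum>k\<le>n. T $ k * w ^ k)"
    using w by auto
  then show ?thesis
    using tail unfolding \<delta>_def by auto
qed

section \<open>Unimodular zeros of self-inversive polynomials\<close>

lemma cis_add_cis: "cis a + cis b = of_real (2 * cos ((a - b) / 2)) * cis ((a + b) / 2)"
proof -
  have a: "(a + b) / 2 + (a - b) / 2 = a" and b: "(a + b) / 2 + - ((a - b) / 2) = b"
    by (simp_all add: field_simps)
  have "cis a + cis b = cis ((a + b) / 2) * (cis ((a - b) / 2) + cis (- ((a - b) / 2)))"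
    unfolding distrib_left cis_mult a b by (rule refl)
  also have "cis ((a - b) / 2) + cis (- ((a - b) / 2)) = of_real (2 * cos ((a - b) / 2))"
    by (simp add: complex_eq_iff)
  finally show ?thesis
    by (simp only: mult.commute)
qed

lemma exists_distinct_angles_cos_eq_0:
  fixes \<psi> :: "real \<Rightarrow> real" and N :: nat
  assumes cont: "continuous_on {-pi..pi} \<psi>" and start: "\<psi> (-pi) = 0" and stop: "\<psi> pi = N * pi"
  obtains \<Theta> where "inj_on (\<lambda>m. cis (\<Theta> m)) {1..N}" "\<And>m. m \<in> {1..N} \<Longrightarrow> cos (\<psi> (\<Theta> m)) = 0"
proof -
  define y where "y m = pi / 2 + real (m - 1) * pi" for m :: nat
  have y_bounds: "0 < y m \<and> y m \<le> N * pi" if "m \<in> {1..N}" for m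
  proof -
    have "real (m - 1) + 1 \<le> real N"
      using that by auto
    then have "real (m - 1) * pi + pi \<le> N * pi"
      by (metis distrib_right mult_1 mult_right_mono pi_ge_zero)
    then show ?thesis
      unfolding y_def by (auto intro!: add_pos_nonneg) (use pi_gt_zero in linarith)
  qed
  have "\<exists>\<theta>. -pi \<le> \<theta> \<and> \<theta> \<le> pi \<and> \<psi> \<theta> = y m" if "m \<in> {1..N}" for m
    using y_bounds[OF that] start stop cont by (intro IVT') auto
  then obtain \<Theta> where \<Theta>: "\<And>m. m \<in> {1..N} \<Longrightarrow> -pi \<le> \<Theta> m \<and> \<Theta> m \<le> pi \<and> \<psi> (\<Theta> m) = y m"
    by metis
  have Arg_cis_\<Theta>: "Arg (cis (\<Theta> m)) = \<Theta> m" if "m \<in> {1..N}" for m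
  proof -
    have "\<Theta> m \<noteq> -pi"
      using \<Theta>[OF that] y_bounds[OF that] start by auto
    then show ?thesis
      using \<Theta>[OF that] by (intro Arg_cis) auto
  qed
  show thesis
  proof
    show "inj_on (\<lambda>m. cis (\<Theta> m)) {1..N}"
    proof (rule inj_onI)
      fix m1 m2 assume m: "m1 \<in> {1..N}" "m2 \<in> {1..N}" and "cis (\<Theta> m1) = cis (\<Theta> m2)"
      then have "\<Theta> m1 = \<Theta> m2"
        using Arg_cis_\<Theta> by metis
      then have "y m1 = y m2"
        using \<Theta> m by metis
      then show "m1 = m2"
        using m unfolding y_def by auto
    qed
    show "cos (\<psi> (\<Theta> m)) = 0" if "m \<in> {1..N}" for m
      using \<Theta>[OF that] by (simp add: y_def cos_add sin_npi)
  qed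
qed

lemma fps_of_poly_reflect_linear:
  fixes c :: complex
  assumes "c \<noteq> 0"
  shows "fps_of_poly (reflect_poly [:-c, 1:]) = 1 - fps_const c * fps_X"
proof -
  have "reflect_poly [:-c, 1:] = [:1, -c:]"
    using assms reflect_poly_pCons'[of "[:1:]" "-c"] by (simp add: monom_altdef)
  moreover have "fps_of_poly [:1, -c:] = 1 - fps_const c * fps_X"
  proof (rule fps_ext)
    show "fps_of_poly [:1, -c:] $ j = (1 - fps_const c * fps_X) $ j" for j
      by (cases j) (auto simp: coeff_pCons split: nat.split)
  qed
  ultimately show ?thesis
    by simp
qed

lemma prod_one_minus_fps_nth_eq_coeff:
  fixes P :: "complex poly" and lam :: "nat \<Rightarrow> complex"
  assumes deg: "degree P \<le> N" and lead: "coeff P N = 1" and inj: "inj_on lam {1..N}"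
    and roots: "\<And>m. m \<in> {1..N} \<Longrightarrow> poly P (lam m) = 0"
    and nz: "\<And>m. m \<in> {1..N} \<Longrightarrow> lam m \<noteq> 0" and k: "k \<le> N"
  shows "(\<Prod>m\<in>{1..N}. 1 - fps_const (lam m) * fps_X) $ k = coeff P (N - k)"
proof -
  define Q where "Q = (\<Prod>m\<in>{1..N}. [:- lam m, 1:])"
  have deg_Q: "degree Q = N"
    unfolding Q_def by (subst degree_prod_eq_sum_degree) auto
  have "P = Q"
  proof (rule poly_eqI_degree_lead_coeff[where A = "lam ` {1..N}"])
    have "lead_coeff Q = 1"
      unfolding Q_def by (simp add: lead_coeff_prod)
    then show "coeff P N = coeff Q N"
      using lead deg_Q by simp
    show "N \<le> card (lam ` {1..N})"
      using card_image[OF inj] by simp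
    show "poly P z = poly Q z" if z: "z \<in> lam ` {1..N}" for z
    proof -
      obtain x where "x \<in> {1..N}" "z = lam x"
        using z by blast
      then show ?thesis
        using roots by (auto simp: Q_def poly_prod prod_zero_iff)
    qed
  qed (use deg deg_Q in auto)
  have deg_P: "degree P = N"
    using deg_Q \<open>P = Q\<close> by simp
  have "(\<Prod>m\<in>{1..N}. 1 - fps_const (lam m) * fps_X) = fps_of_poly (reflect_poly P)"
    unfolding \<open>P = Q\<close> Q_def reflect_poly_prod fps_of_poly_prod
    by (intro prod.cong refl fps_of_poly_reflect_linear[symmetric] nz)
  also have "fps_of_poly (reflect_poly P) $ k = coeff P (N - k)"
    using k by (simp add: coeff_reflect_poly deg_P)
  finally show ?thesis .
qed

text \<open>\<open>z\<^sup>N T(1/z) + \<omega> cnj (T (cnj z))\<close> for \<open>T w = (\<Sum>k\<le>n. t k * w ^ k)\<close> and \<open>N = 2n + 1\<close>.\<close>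

definition self_inversive_poly :: "nat \<Rightarrow> (nat \<Rightarrow> complex) \<Rightarrow> complex \<Rightarrow> complex poly" where
  "self_inversive_poly n t \<omega> = (\<Sum>k\<le>n. monom (t k) (2*n+1-k)) + smult \<omega> (\<Sum>k\<le>n. monom (cnj (t k)) k)"

lemma coeff_self_inversive_poly:
  "coeff (self_inversive_poly n t \<omega>) j =
     (\<Sum>k\<le>n. if 2*n+1-k = j then t k else 0) + (if j \<le> n then \<omega> * cnj (t j) else 0)"
  by (simp add: self_inversive_poly_def coeff_sum coeff_monom if_distrib[of "\<lambda>x. \<omega> * x"] sum.delta' cong: if_cong)

lemma coeff_self_inversive_poly_top:
  assumes "k \<le> n"
  shows "coeff (self_inversive_poly n t \<omega>) (2*n+1-k) = t k"
proof -
  have "(\<Sum>j\<le>n. if 2*n+1-j = 2*n+1-k then t j else 0) = (\<Sum>j\<le>n. if j = k then t j else 0)"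
    using assms by (intro sum.cong) auto
  then show ?thesis
    using assms by (simp add: coeff_self_inversive_poly)
qed

lemma degree_self_inversive_poly_le: "degree (self_inversive_poly n t \<omega>) \<le> 2*n+1"
  by (rule degree_le) (auto simp: coeff_self_inversive_poly intro!: sum.neutral)

lemma poly_self_inversive_poly_cis:
  "poly (self_inversive_poly n t \<omega>) (cis \<theta>) =
     cis (real (2*n+1) * \<theta>) * (\<Sum>k\<le>n. t k * cis (-\<theta>) ^ k) + \<omega> * cnj (\<Sum>k\<le>n. t k * cis (-\<theta>) ^ k)"
proof -
  have term_eq: "t k * cis \<theta> ^ (2*n+1-k) = cis (real (2*n+1) * \<theta>) * (t k * cis (-\<theta>) ^ k)" if "k \<le> n" for k
  proof -
    have "cis \<theta> ^ (2*n+1) = cis \<theta> ^ (2*n+1-k) * cis \<theta> ^ k"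
      using power_add[of "cis \<theta>" "2*n+1-k" k] that by simp
    moreover have "cis \<theta> ^ k * cis (-\<theta>) ^ k = 1"
      by (simp flip: power_mult_distrib add: cis_mult)
    ultimately have pow: "cis \<theta> ^ (2*n+1-k) = cis \<theta> ^ (2*n+1) * cis (-\<theta>) ^ k"
      by (simp add: mult.assoc)
    show ?thesis
      unfolding pow Complex.DeMoivre[of \<theta> "2*n+1"] by (simp only: mult_ac)
  qed
  have "poly (self_inversive_poly n t \<omega>) (cis \<theta>) =
      (\<Sum>k\<le>n. t k * cis \<theta> ^ (2*n+1-k)) + \<omega> * (\<Sum>k\<le>n. cnj (t k) * cis \<theta> ^ k)"
    by (simp add: self_inversive_poly_def poly_sum poly_monom)
  also have "(\<Sum>k\<le>n. t k * cis \<theta> ^ (2*n+1-k)) = cis (real (2*n+1) * \<theta>) * (\<Sum>k\<le>n. t k * cis (-\<theta>) ^ k)"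
    unfolding sum_distrib_left by (rule sum.cong[OF refl], rule term_eq) simp
  also have "(\<Sum>k\<le>n. cnj (t k) * cis \<theta> ^ k) = cnj (\<Sum>k\<le>n. t k * cis (-\<theta>) ^ k)"
    by (simp add: cis_cnj)
  finally show ?thesis .
qed

lemma continuous_polar_form_on_circle:
  fixes T :: "complex \<Rightarrow> complex"
  assumes cont: "continuous_on (cball 0 1) T" and nz: "\<And>w. w \<in> cball 0 1 \<Longrightarrow> T w \<noteq> 0"
  obtains \<phi> R :: "real \<Rightarrow> real"
  where "continuous_on UNIV \<phi>" "\<phi> pi = \<phi> (-pi)" "\<And>\<theta>. T (cis (-\<theta>)) = of_real (R \<theta>) * cis (\<phi> \<theta>)"
proof -
  obtain g where g_cont: "continuous_on (cball 0 1) g" and T_exp: "\<And>w. w \<in> cball 0 1 \<Longrightarrow> T w = exp (g w)"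
    using continuous_logarithm_on_cball[OF cont nz] by blast
  have "continuous_on UNIV (\<lambda>\<theta>. g (cis (-\<theta>)))"
    by (rule continuous_on_compose2[OF g_cont]) (auto intro!: continuous_intros)
  moreover have "cis (- pi) = cis pi"
    by (simp add: complex_eq_iff)
  ultimately show thesis
    using T_exp by (intro that[of "\<lambda>\<theta>. Im (g (cis (-\<theta>)))" "\<lambda>\<theta>. exp (Re (g (cis (-\<theta>))))"])
      (auto intro!: continuous_intros simp: exp_eq_polar)
qed

lemma poly_self_inversive_poly_cis_eq_0:
  assumes polar: "(\<Sum>k\<le>n. t k * cis (-\<theta>) ^ k) = of_real R * cis \<phi>"
    and cos_0: "cos ((real (2*n+1) * \<theta> + 2 * \<phi> - \<alpha>) / 2) = 0"
  shows "poly (self_inversive_poly n t (cis \<alpha>)) (cis \<theta>) = 0"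
proof -
  define N where "N = real (2*n+1)"
  have "poly (self_inversive_poly n t (cis \<alpha>)) (cis \<theta>) = cis (N * \<theta>) * (of_real R * cis \<phi>) + cis \<alpha> * (of_real R * cis (- \<phi>))"
    unfolding poly_self_inversive_poly_cis polar N_def by (simp add: cis_cnj)
  also have "\<dots> = of_real R * (cis (N * \<theta> + \<phi>) + cis (\<alpha> - \<phi>))"
    by (simp only: distrib_left mult.left_commute[of "cis _"] cis_mult diff_conv_add_uminus)
  also have "\<dots> = of_real R * of_real (2 * cos (((N * \<theta> + \<phi>) - (\<alpha> - \<phi>)) / 2)) * cis ((N * \<theta> + \<phi> + (\<alpha> - \<phi>)) / 2)"
    by (simp only: cis_add_cis mult.assoc)
  also have "(N * \<theta> + \<phi>) - (\<alpha> - \<phi>) = N * \<theta> + 2 * \<phi> - \<alpha>"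
    by simp
  finally show ?thesis
    using cos_0 by (simp add: N_def)
qed

lemma exists_unimodular_prod_one_minus_prefix:
  fixes t :: "nat \<Rightarrow> complex" and n :: nat
  assumes t0: "t 0 = 1" and nz: "\<And>w. norm w \<le> 1 \<Longrightarrow> (\<Sum>k\<le>n. t k * w ^ k) \<noteq> 0"
  obtains lam where "inj_on lam {1..2*n+1}" "\<And>m. m \<in> {1..2*n+1} \<Longrightarrow> norm (lam m) = 1"
    "\<And>k. k \<le> n \<Longrightarrow> (\<Prod>m\<in>{1..2*n+1}. 1 - fps_const (lam m) * fps_X) $ k = t k"
proof -
  define N where "N = 2*n+1"
  define T where "T w = (\<Sum>k\<le>n. t k * w ^ k)" for w
  have T_cont: "continuous_on (cball 0 1) T"
    unfolding T_def by (intro continuous_intros)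
  have T_nz: "T w \<noteq> 0" if "w \<in> cball 0 1" for w
    using nz that by (simp add: T_def)
  obtain \<phi> R where \<phi>_cont: "continuous_on UNIV \<phi>" and \<phi>_periodic: "\<phi> pi = \<phi> (-pi)"
    and polar: "\<And>\<theta>. T (cis (-\<theta>)) = of_real (R \<theta>) * cis (\<phi> \<theta>)"
    using continuous_polar_form_on_circle[OF T_cont T_nz] by blast
  \<comment> \<open>On the circle the self-inversive polynomial is \<open>2 R cos \<psi>\<close> times a unimodular factor,
    and \<open>\<psi>\<close> increases by \<open>N \<pi>\<close> over one turn.\<close>
  define \<psi> where "\<psi> \<theta> = real N * (\<theta> + pi) / 2 + \<phi> \<theta> - \<phi> (-pi)" for \<theta>
  have "continuous_on {-pi..pi} \<psi>"
    unfolding \<psi>_def by (intro continuous_intros continuous_on_subset[OF \<phi>_cont]) auto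
  moreover have "\<psi> (-pi) = 0" "\<psi> pi = N * pi"
    using \<phi>_periodic by (simp_all add: \<psi>_def)
  ultimately obtain \<Theta> where inj: "inj_on (\<lambda>m. cis (\<Theta> m)) {1..N}"
    and cos_0: "\<And>m. m \<in> {1..N} \<Longrightarrow> cos (\<psi> (\<Theta> m)) = 0"
    using exists_distinct_angles_cos_eq_0 by blast
  define \<alpha> where "\<alpha> = 2 * \<phi> (-pi) - N * pi"
  define P where "P = self_inversive_poly n t (cis \<alpha>)"
  have root: "poly P (cis (\<Theta> m)) = 0" if "m \<in> {1..N}" for m
  proof (unfold P_def, rule poly_self_inversive_poly_cis_eq_0[OF polar[unfolded T_def]])
    have "(real (2*n+1) * \<Theta> m + 2 * \<phi> (\<Theta> m) - \<alpha>) / 2 = \<psi> (\<Theta> m)"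
      by (simp add: \<psi>_def \<alpha>_def N_def field_simps)
    then show "cos ((real (2*n+1) * \<Theta> m + 2 * \<phi> (\<Theta> m) - \<alpha>) / 2) = 0"
      using cos_0[OF that] by simp
  qed
  have "degree P \<le> N"
    unfolding P_def N_def by (rule degree_self_inversive_poly_le)
  moreover have "coeff P N = 1"
    using coeff_self_inversive_poly_top[of 0 n t] t0 by (simp add: P_def N_def)
  ultimately have "(\<Prod>m\<in>{1..N}. 1 - fps_const (cis (\<Theta> m)) * fps_X) $ k = coeff P (N - k)" if "k \<le> N" for k
    using that root inj by (intro prod_one_minus_fps_nth_eq_coeff) auto
  moreover have "coeff P (N - k) = t k" if "k \<le> n" for k
    unfolding P_def N_def using that by (rule coeff_self_inversive_poly_top)
  ultimately show thesis
    using inj by (intro that[of "\<lambda>m. cis (\<Theta> m)"]) (auto simp: N_def)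
qed

section \<open>Power sums\<close>

lemma one_minus_fps_X_times_geometric:
  "(1 - fps_const c * fps_X) * Abs_fps (\<lambda>j. c ^ Suc j) = fps_const (c :: 'a :: comm_ring_1)"
proof (rule fps_ext)
  fix j
  have "(1 - fps_const c * fps_X) * Abs_fps (\<lambda>j. c ^ Suc j)
      = Abs_fps (\<lambda>j. c ^ Suc j) - fps_const c * (fps_X * Abs_fps (\<lambda>j. c ^ Suc j))"
    by (simp add: left_diff_distrib mult.assoc)
  then show "((1 - fps_const c * fps_X) * Abs_fps (\<lambda>j. c ^ Suc j)) $ j = fps_const c $ j"
    by (cases j) simp_all
qed

lemma fps_deriv_prod_one_minus:
  fixes L :: "'b \<Rightarrow> 'a :: comm_ring_1"
  assumes "finite A"
  shows "fps_deriv (\<Prod>m\<in>A. 1 - fps_const (L m) * fps_X) =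
         - ((\<Prod>m\<in>A. 1 - fps_const (L m) * fps_X) * (\<Sum>m\<in>A. Abs_fps (\<lambda>j. L m ^ Suc j)))"
  using assms
proof (induction A rule: finite_induct)
  case (insert a A)
  define f where "f = 1 - fps_const (L a) * fps_X"
  define g where "g = Abs_fps (\<lambda>j. L a ^ Suc j)"
  define P where "P = (\<Prod>m\<in>A. 1 - fps_const (L m) * fps_X)"
  define S where "S = (\<Sum>m\<in>A. Abs_fps (\<lambda>j. L m ^ Suc j))"
  have "fps_deriv (f * P) = - fps_const (L a) * P + f * fps_deriv P"
    by (simp add: f_def fps_deriv_mult)
  also have "fps_const (L a) = f * g"
    unfolding f_def g_def by (rule one_minus_fps_X_times_geometric[symmetric])
  also have "fps_deriv P = - (P * S)"
    unfolding P_def S_def by (rule insert.IH)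
  also have "- (f * g) * P + f * - (P * S) = - (f * P * (g + S))"
    by (simp add: algebra_simps)
  finally show ?case
    using insert.hyps by (simp add: f_def g_def P_def S_def)
qed simp

lemma fps_nth_eq_if_log_derivs_agree:
  fixes A B C D :: "'a :: comm_ring_1 fps"
  assumes dA: "fps_deriv A = - (A * B)" and dC: "fps_deriv C = - (C * D)"
    and A0: "A $ 0 = 1" and AC: "\<And>k. k \<le> n \<Longrightarrow> A $ k = C $ k"
  shows "i < n \<Longrightarrow> B $ i = D $ i"
proof (induction i rule: less_induct)
  case (less i)
  have "(A * B) $ i = (C * D) $ i"
    using arg_cong[OF dA, of "\<lambda>F. F $ i"] arg_cong[OF dC, of "\<lambda>F. F $ i"] AC less.prems by simp
  moreover have "(A * B) $ i = A $ 0 * B $ i + (\<Sum>j\<in>{1..i}. A $ j * B $ (i - j))"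
    and "(C * D) $ i = C $ 0 * D $ i + (\<Sum>j\<in>{1..i}. C $ j * D $ (i - j))"
    by (simp_all add: fps_mult_nth sum.atLeast_Suc_atMost)
  moreover have "(\<Sum>j\<in>{1..i}. A $ j * B $ (i - j)) = (\<Sum>j\<in>{1..i}. C $ j * D $ (i - j))"
    using less AC by (intro sum.cong refl) auto
  ultimately show ?case
    using A0 AC[of 0] by simp
qed

theorem eventually_unimodular_power_sums:
  fixes A :: "complex fps"
  assumes rad: "fps_conv_radius A \<ge> 1" and bnd: "\<And>z. norm z < 1 \<Longrightarrow> norm (eval_fps A z) \<le> B"
  shows "\<exists>n1. \<forall>n\<ge>n1. \<exists>lam. inj_on lam {1..2*n+1} \<and> (\<forall>m\<in>{1..2*n+1}. norm (lam m) = 1) \<and>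
           (\<forall>j<n. (\<Sum>m\<in>{1..2*n+1}. lam m ^ Suc j) = A $ j)"
proof -
  obtain T where T0: "T $ 0 = 1" and dT: "fps_deriv T = - (T * A)"
    and T_summable: "summable (\<lambda>k. norm (T $ k))" and T_low: "\<And>w. norm w < 1 \<Longrightarrow> exp (- B) \<le> norm (eval_fps T w)"
    using bounded_fps_exp_primitive[OF rad bnd] by blast
  obtain n1 where n1: "\<And>n. n \<ge> n1 \<Longrightarrow> norm (\<Sum>i. norm (T $ (i + n))) < exp (- B)"
    using suminf_exist_split[OF exp_gt_zero T_summable] by blast
  have "\<exists>lam. inj_on lam {1..2*n+1} \<and> (\<forall>m\<in>{1..2*n+1}. norm (lam m) = 1) \<and>
           (\<forall>j<n. (\<Sum>m\<in>{1..2*n+1}. lam m ^ Suc j) = A $ j)" if "n \<ge> n1" for n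
  proof -
    have "(\<Sum>i. norm (T $ (i + Suc n))) < exp (- B)"
      using n1[of "Suc n"] that by simp
    then have "(\<Sum>k\<le>n. T $ k * w ^ k) \<noteq> 0" if "norm w \<le> 1" for w
      using fps_truncation_nonzero_on_cball[OF T_summable T_low] that by blast
    then obtain lam where inj: "inj_on lam {1..2*n+1}" and unimodular: "\<And>m. m \<in> {1..2*n+1} \<Longrightarrow> norm (lam m) = 1"
      and prefix: "\<And>k. k \<le> n \<Longrightarrow> (\<Prod>m\<in>{1..2*n+1}. 1 - fps_const (lam m) * fps_X) $ k = T $ k"
      using exists_unimodular_prod_one_minus_prefix[of "fps_nth T" n] T0 by blast
    have "(\<Prod>m\<in>{1..2*n+1}. 1 - fps_const (lam m) * fps_X) $ 0 = 1"
      using prefix[of 0] T0 by simp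
    then have "(\<Sum>m\<in>{1..2*n+1}. Abs_fps (\<lambda>j. lam m ^ Suc j)) $ j = A $ j" if "j < n" for j
      using fps_nth_eq_if_log_derivs_agree[OF fps_deriv_prod_one_minus[OF finite_atLeastAtMost] dT _ prefix that]
      by blast
    then show ?thesis
      using inj unimodular by (auto simp: fps_sum_nth)
  qed
  then show ?thesis
    by blast
qed

section \<open>The approximation estimate\<close>

lemma norm_sums_le_geometric_tail:
  fixes d :: "nat \<Rightarrow> complex"
  assumes sums: "(\<lambda>j. d j * z ^ Suc j) sums s" and zero: "\<And>j. j < n \<Longrightarrow> d j = 0"
    and bound: "\<And>j. norm (d j) \<le> C" and z: "norm z < 1"
  shows "norm s \<le> C * norm z ^ (n+1) / (1 - norm z)"
proof -
  define r where "r = norm z"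
  have "(\<Sum>j<n. d j * z ^ Suc j) = 0"
    using zero by simp
  then have tail_sums: "(\<lambda>i. d (i + n) * z ^ Suc (i + n)) sums s"
    using sums_split_initial_segment[OF sums, of n] by simp
  have geometric: "(\<lambda>i. C * r ^ (n+1) * r ^ i) sums (C * r ^ (n+1) / (1 - r))"
    using geometric_sums[of r] z sums_mult[of "\<lambda>i. r ^ i" _ "C * r ^ (n+1)"]
    by (simp add: r_def divide_inverse)
  have le: "norm (d (i + n) * z ^ Suc (i + n)) \<le> C * r ^ (n+1) * r ^ i" for i
  proof -
    have "norm (d (i + n) * z ^ Suc (i + n)) = norm (d (i + n)) * (r ^ (n+1) * r ^ i)"
      by (simp add: r_def norm_mult norm_power power_add mult_ac)
    also have "\<dots> \<le> C * (r ^ (n+1) * r ^ i)"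
      using bound by (intro mult_right_mono) (auto simp: r_def)
    finally show ?thesis
      by (simp add: mult_ac)
  qed
  have "norm (\<Sum>i. d (i + n) * z ^ Suc (i + n)) \<le> (\<Sum>i. C * r ^ (n+1) * r ^ i)"
    using le sums_summable[OF geometric] by (rule norm_suminf_le)
  then have "norm s \<le> (\<Sum>i. C * r ^ (n+1) * r ^ i)"
    using sums_unique[OF tail_sums] by simp
  then show ?thesis
    using sums_unique[OF geometric] by (simp add: r_def)
qed

lemma norm_sum_ser_diff_le:
  fixes lam :: "'i \<Rightarrow> complex" and hc fc :: "nat \<Rightarrow> complex" and M B :: real
  assumes unimodular: "\<And>k. k \<in> I \<Longrightarrow> norm (lam k) = 1"
    and h_conv: "\<And>z. norm z < 1 \<Longrightarrow> summable (\<lambda>j. hc (Suc j) * z ^ Suc j)"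
    and f_conv: "\<And>z. norm z < 1 \<Longrightarrow> summable (\<lambda>j. fc (Suc j) * z ^ Suc j)"
    and power_sums: "\<And>j. j < n \<Longrightarrow> hc (Suc j) * (\<Sum>k\<in>I. lam k ^ Suc j) = fc (Suc j)"
    and h_bnd: "\<And>j. norm (hc (Suc j)) \<le> M" and f_bnd: "\<And>j. norm (fc (Suc j)) \<le> M * B"
    and z: "norm z < 1"
  shows "norm ((\<Sum>k\<in>I. ser hc (lam k * z)) - ser fc z) \<le> M * (card I + B) * norm z ^ (n+1) / (1 - norm z)"
proof -
  define d where "d j = hc (Suc j) * (\<Sum>k\<in>I. lam k ^ Suc j) - fc (Suc j)" for j
  have h_sums: "(\<lambda>j. hc (Suc j) * (lam k * z) ^ Suc j) sums ser hc (lam k * z)" if "k \<in> I" for k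
    unfolding ser_def using unimodular[OF that] z by (intro summable_sums h_conv) (simp add: norm_mult)
  have f_sums: "(\<lambda>j. fc (Suc j) * z ^ Suc j) sums ser fc z"
    unfolding ser_def using z by (intro summable_sums f_conv)
  have "(\<lambda>j. (\<Sum>k\<in>I. hc (Suc j) * (lam k * z) ^ Suc j) - fc (Suc j) * z ^ Suc j)
      sums ((\<Sum>k\<in>I. ser hc (lam k * z)) - ser fc z)"
    by (intro sums_diff sums_sum h_sums f_sums)
  moreover have "(\<Sum>k\<in>I. hc (Suc j) * (lam k * z) ^ Suc j) - fc (Suc j) * z ^ Suc j = d j * z ^ Suc j" for j
    by (simp add: d_def sum_distrib_left power_mult_distrib algebra_simps)
  ultimately have d_sums: "(\<lambda>j. d j * z ^ Suc j) sums ((\<Sum>k\<in>I. ser hc (lam k * z)) - ser fc z)"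
    by simp
  have d_bnd: "norm (d j) \<le> M * (card I + B)" for j
  proof -
    have "norm (\<Sum>k\<in>I. lam k ^ Suc j) \<le> (\<Sum>k\<in>I. norm (lam k ^ Suc j))"
      by (rule norm_sum)
    also have "\<dots> = (\<Sum>k\<in>I. 1)"
      by (intro sum.cong refl) (simp add: norm_mult norm_power unimodular)
    also have "\<dots> = card I"
      by simp
    finally have "norm (hc (Suc j) * (\<Sum>k\<in>I. lam k ^ Suc j)) \<le> M * card I"
      unfolding norm_mult using h_bnd[of j] by (intro mult_mono) (auto intro: order_trans[OF norm_ge_zero])
    then show ?thesis
      unfolding d_def using norm_triangle_ineq4 f_bnd[of j] by (smt (verit) distrib_left)
  qed
  have d_zero: "j < n \<Longrightarrow> d j = 0" for j
    unfolding d_def using power_sums[of j] by (simp only: diff_self)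
  show ?thesis
    by (rule norm_sums_le_geometric_tail[OF d_sums d_zero d_bnd z])
qed

lemma cube_le_one_plus_power:
  fixes x :: real
  assumes x: "0 \<le> x" and km: "3 * k \<le> m"
  shows "(real k * x) ^ 3 \<le> (1 + x) ^ m"
proof -
  have "real k * x \<le> (1 + x) ^ k"
    using Bernoulli_inequality[of x k] x by simp
  then have "(real k * x) ^ 3 \<le> ((1 + x) ^ k) ^ 3"
    using x by (intro power_mono) auto
  also have "\<dots> = (1 + x) ^ (3 * k)"
    by (simp add: power_mult mult.commute)
  also have "\<dots> \<le> (1 + x) ^ m"
    using x km by (intro power_increasing) auto
  finally show ?thesis .
qed

lemma linear_mult_cube_le_power:
  fixes B t :: real
  assumes t: "0 \<le> t" and B: "B \<le> real n" and n: "16 \<le> n"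
  shows "(real (2*n+1) + B) * t^3 \<le> 32 * (1 + t/4) ^ (n+1)"
proof -
  define k where "k = n div 3"
  have k: "5 \<le> k" "n \<le> 3 * k + 2" "3 * k \<le> n + 1"
    using n unfolding k_def by presburger+
  have "25 \<le> k * k"
    using mult_le_mono[OF k(1) k(1)] by simp
  then have "25 * k \<le> k * k * k"
    by (rule mult_right_mono) simp
  then have "6 * n + 2 \<le> k ^ 3"
    unfolding power3_eq_cube using k by linarith
  then have "2 * (real (2*n+1) + B) \<le> real k ^ 3"
    using B by (simp flip: of_nat_power)
  then have "(real (2*n+1) + B) * t^3 \<le> real k ^ 3 / 2 * t^3"
    using t by (intro mult_right_mono) auto
  also have "\<dots> = 32 * (real k * (t/4)) ^ 3"
    by (simp add: power_mult_distrib power_divide)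
  also have "\<dots> \<le> 32 * (1 + t/4) ^ (n+1)"
    using t k by (intro mult_left_mono cube_le_one_plus_power) auto
  finally show ?thesis .
qed

lemma geometric_tail_le_corollary_bound:
  fixes M B r :: real and n :: nat
  assumes M: "0 \<le> M" and B: "0 \<le> B" "B \<le> real n" and n: "16 \<le> n" and r: "0 \<le> r" "r < 1"
  shows "M * (real (2*n+1) + B) * r ^ (n+1) / (1 - r)
    \<le> (5 * r - r^2) ^ (n+1) / ((4::real) powi (int n - 1)) * (2 * M / 3) * (3 + r) / (1 - r) ^ 4"
proof -
  define t where "t = 1 - r"
  define X where "X = (1 + t/4) ^ (n+1)"
  have t: "0 < t" "t \<le> 1"
    using r by (auto simp: t_def)
  have key: "(real (2*n+1) + B) * t^3 \<le> 32 * X"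
    unfolding X_def using t B n by (intro linear_mult_cube_le_power) auto
  have "int n - 1 = int (n - 1)"
    using n by simp
  have powi: "(4::real) powi (int n - 1) = 4 ^ (n - 1)"
    unfolding \<open>int n - 1 = int (n - 1)\<close> by (rule power_int_of_nat)
  have "n + 1 = (n - 1) + 2"
    using n by simp
  have "(4::real) ^ (n+1) = 16 * 4 ^ (n - 1)"
    unfolding \<open>n + 1 = (n - 1) + 2\<close> power_add by simp
  moreover have "5 * r - r^2 = 4 * r * (1 + t/4)"
    by (simp add: t_def field_simps power2_eq_square)
  ultimately have "(5 * r - r^2) ^ (n+1) = 4 ^ (n - 1) * (16 * r ^ (n+1) * X)"
    by (simp add: X_def power_mult_distrib)
  then have RHS: "(5 * r - r^2) ^ (n+1) / ((4::real) powi (int n - 1)) * (2 * M / 3) * (3 + r) / (1 - r) ^ 4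
      = M * r ^ (n+1) * (16 * X * (2 / 3 * (3 + r))) / t ^ 4"
    unfolding powi by (simp add: t_def)
  have "t ^ 4 = t ^ 3 * t"
    by (simp add: power3_eq_cube power4_eq_xxxx)
  then have "M * (real (2*n+1) + B) * r ^ (n+1) / (1 - r) = M * r ^ (n+1) * ((real (2*n+1) + B) * t^3) / t ^ 4"
    using t by (simp add: t_def[symmetric] field_simps)
  also have "\<dots> \<le> M * r ^ (n+1) * (32 * X) / t ^ 4"
    using key t M r by (intro divide_right_mono mult_left_mono) auto
  also have "\<dots> \<le> M * r ^ (n+1) * (16 * X * (2 / 3 * (3 + r))) / t ^ 4"
    using t M r by (intro divide_right_mono mult_left_mono) (auto simp: X_def)
  finally show ?thesis
    unfolding RHS .
qed

lemma fps_conv_radius_ge_1I: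
  fixes F :: "complex fps"
  assumes "\<And>z. norm z < 1 \<Longrightarrow> summable (\<lambda>j. F $ j * z ^ j)"
  shows "fps_conv_radius F \<ge> 1"
  unfolding fps_conv_radius_def
proof (rule conv_radius_geI_ex)
  fix r :: real
  assume "0 < r" "ereal r < 1"
  then show "\<exists>z. norm z = r \<and> summable (\<lambda>j. F $ j * z ^ j)"
    using assms[of "of_real r"] by (intro exI[of _ "of_real r"]) auto
qed

lemma sum_ser_approximation_bound:
  fixes hc fc a lam :: "nat \<Rightarrow> complex" and M B :: real
  assumes unimodular: "\<forall>m\<in>{1..2*n+1}. norm (lam m) = 1"
    and power_sums: "\<And>j. j < n \<Longrightarrow> (\<Sum>m\<in>{1..2*n+1}. lam m ^ Suc j) = a j"
    and fc_eq: "\<And>j. fc (Suc j) = hc (Suc j) * a j"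
    and h_conv: "\<And>z. norm z < 1 \<Longrightarrow> summable (\<lambda>j. hc (Suc j) * z ^ Suc j)"
    and f_conv: "\<And>z. norm z < 1 \<Longrightarrow> summable (\<lambda>j. fc (Suc j) * z ^ Suc j)"
    and hc_bnd: "\<And>j. norm (hc (Suc j)) \<le> M" and a_bnd: "\<And>j. norm (a j) \<le> B"
    and n: "16 \<le> n" "B \<le> real n" and z: "norm z < 1"
  shows "norm ((\<Sum>k=1..2*n+1. ser hc (lam k * z)) - ser fc z)
    \<le> (5 * norm z - (norm z)^2) ^ (n+1) / ((4::real) powi (int n - 1)) * (2 * M / 3) * (3 + norm z) / (1 - norm z) ^ 4"
proof -
  have M: "0 \<le> M" and B: "0 \<le> B"
    using hc_bnd[of 0] a_bnd[of 0] norm_ge_zero order_trans by blast+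
  have fc_bnd: "norm (fc (Suc j)) \<le> M * B" for j
    unfolding fc_eq norm_mult using hc_bnd a_bnd by (intro mult_mono') auto
  have "hc (Suc j) * (\<Sum>m\<in>{1..2*n+1}. lam m ^ Suc j) = fc (Suc j)" if "j < n" for j
    using power_sums[OF that] by (simp add: fc_eq)
  then have "norm ((\<Sum>k=1..2*n+1. ser hc (lam k * z)) - ser fc z)
      \<le> M * (real (card {1..2*n+1}) + B) * norm z ^ (n+1) / (1 - norm z)"
    using unimodular by (intro norm_sum_ser_diff_le[OF _ h_conv f_conv _ hc_bnd fc_bnd z]) auto
  also have "\<dots> = M * (real (2*n+1) + B) * norm z ^ (n+1) / (1 - norm z)"
    by simp
  also have "\<dots> \<le> (5 * norm z - (norm z)^2) ^ (n+1) / ((4::real) powi (int n - 1)) * (2 * M / 3) * (3 + norm z) / (1 - norm z) ^ 4"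
    using M B n z by (intro geometric_tail_le_corollary_bound) auto
  finally show ?thesis .
qed

theorem corollary2p1:
  fixes hc fc :: "nat \<Rightarrow> complex" and M :: real
  assumes h_coef: "\<And>j. j \<ge> 1 \<Longrightarrow> 0 < norm (hc j) \<and> norm (hc j) \<le> M"
    and h_conv: "\<And>z. norm z < 1 \<Longrightarrow> summable (\<lambda>j. hc (Suc j) * z ^ Suc j)"
    and h_anal: "ser hc holomorphic_on ball 0 1"
    and f_conv: "\<And>z. norm z < 1 \<Longrightarrow> summable (\<lambda>j. fc (Suc j) * z ^ Suc j)"
    and F1_conv: "\<And>z. norm z < 1 \<Longrightarrow> summable (\<lambda>j. (fc (Suc j) / hc (Suc j)) * z ^ j)"
    and F1_anal: "F1fun fc hc holomorphic_on ball 0 1"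
    and F1_bdd: "\<exists>B. \<forall>z. norm z < 1 \<longrightarrow> norm (F1fun fc hc z) \<le> B"
  shows "\<exists>n1::nat. \<forall>n\<ge>n1. \<exists>lam :: nat \<Rightarrow> complex.
           inj_on lam {1..2*n+1} \<and> (\<forall>k\<in>{1..2*n+1}. norm (lam k) = 1) \<and>
           (\<forall>z::complex. norm z < 1 \<longrightarrow>
              norm ((\<Sum>k=1..2*n+1. ser hc (lam k * z)) - ser fc z)
                \<le> (5 * norm z - (norm z)^2) ^ (n+1) / ((4::real) powi (int n - 1))
                   * (2 * M / 3) * (3 + norm z) / (1 - norm z) ^ 4)"
proof -
  define a where "a j = fc (Suc j) / hc (Suc j)" for j
  have hc_nz: "hc (Suc j) \<noteq> 0" and hc_bnd: "norm (hc (Suc j)) \<le> M" for j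
    using h_coef[of "Suc j"] by auto
  have F1_eq: "F1fun fc hc = eval_fps (Abs_fps a)"
    by (simp add: fun_eq_iff F1fun_def eval_fps_def a_def)
  have rad: "fps_conv_radius (Abs_fps a) \<ge> 1"
    using F1_conv by (intro fps_conv_radius_ge_1I) (simp add: a_def)
  obtain B where B: "\<And>z. norm z < 1 \<Longrightarrow> norm (eval_fps (Abs_fps a) z) \<le> B"
    using F1_bdd unfolding F1_eq by blast
  have a_bnd: "norm (a j) \<le> B" for j
    using norm_fps_nth_le_if_eval_fps_bounded[OF rad B, of j] by simp
  obtain n1 where n1: "\<And>n. n \<ge> n1 \<Longrightarrow> \<exists>lam. inj_on lam {1..2*n+1} \<and> (\<forall>m\<in>{1..2*n+1}. norm (lam m) = 1)
      \<and> (\<forall>j<n. (\<Sum>m\<in>{1..2*n+1}. lam m ^ Suc j) = a j)"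
    using eventually_unimodular_power_sums[OF rad B] by auto
  show ?thesis
  proof (intro exI[of _ "max n1 (16 + nat \<lceil>B\<rceil>)"] allI impI)
    fix n
    assume n: "max n1 (16 + nat \<lceil>B\<rceil>) \<le> n"
    then obtain lam where "inj_on lam {1..2*n+1}" "\<forall>m\<in>{1..2*n+1}. norm (lam m) = 1"
      "\<And>j. j < n \<Longrightarrow> (\<Sum>m\<in>{1..2*n+1}. lam m ^ Suc j) = a j"
      using n1[of n] by auto
    moreover have "16 \<le> n" "B \<le> real n"
      using n real_nat_ceiling_ge[of B] by linarith+
    ultimately show "\<exists>lam. inj_on lam {1..2*n+1} \<and> (\<forall>k\<in>{1..2*n+1}. norm (lam k) = 1) \<and>
           (\<forall>z::complex. norm z < 1 \<longrightarrow>
              norm ((\<Sum>k=1..2*n+1. ser hc (lam k * z)) - ser fc z)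
                \<le> (5 * norm z - (norm z)^2) ^ (n+1) / ((4::real) powi (int n - 1))
                   * (2 * M / 3) * (3 + norm z) / (1 - norm z) ^ 4)"
      using hc_nz hc_bnd a_bnd h_conv f_conv
      by (intro exI[of _ lam] conjI allI impI sum_ser_approximation_bound) (auto simp: a_def)
  qed
qed

end
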